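(* Let $k\ge 3$, let $G_1,\ldots,G_k$ be a finite sequence of pairwise disjoint connected graphs and let $x_i\in V(G_i)$. Let $G$ be the circuit of the graphs $\{G_i\}_{i=1}^k$ with respect to the vertices $\{x_i\}_{i=1}^k$. Then $$SO(G)>\frac{|d_{x_1}-d_{x_k}|}{\sqrt{2}}+\sum_{i=1}^{k}SO(G_i)+\sum_{i=1}^{k-1}\frac{|d_{x_i}-d_{x_{i+1}}|}{\sqrt{2}},$$ where $d_v$ denotes the degree of $v$ in $G$.
   Context: All graphs are finite and simple. For a graph $H$, $SO(H)=\sum_{uv\in E(H)}\sqrt{d_u^2+d_v^2}$, where $d_u$ is the degree of $u$ in $H$ (the Sombor index). The circuit of $G_1,\ldots,G_k$ with respect to $x_1,\ldots,x_k$ is the graph obtained from the disjoint union of $G_1,\ldots,G_k$ and a cycle $C_k$ with vertices $c_1,\ldots,c_k$ in cyclic order, by identifying $x_i$ with $c_i$ for each $i$ (so the edges $x_ix_{i+1}$, $1\le i\le k-1$, and $x_kx_1$ are added). *)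

theory Defs
  imports Complex_Main
begin

type_synonym 'a graph = "'a set \<times> 'a set set"

definition verts :: "'a graph \<Rightarrow> 'a set" where "verts G = fst G"
definition edges :: "'a graph \<Rightarrow> 'a set set" where "edges G = snd G"

definition simple_graph :: "'a graph \<Rightarrow> bool" where
  "simple_graph G \<longleftrightarrow> finite (verts G) \<and>
     (\<forall>e\<in>edges G. \<exists>u v. e = {u, v} \<and> u \<noteq> v \<and> u \<in> verts G \<and> v \<in> verts G)"

definition degree :: "'a graph \<Rightarrow> 'a \<Rightarrow> nat" where
  "degree G v = card {e \<in> edges G. v \<in> e}"

definition adj_rel :: "'a graph \<Rightarrow> ('a \<times> 'a) set" where
  "adj_rel G = {(u, v). {u, v} \<in> edges G}"

definition connected_graph :: "'a graph \<Rightarrow> bool" where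
  "connected_graph G \<longleftrightarrow> simple_graph G \<and> verts G \<noteq> {} \<and>
     (\<forall>u\<in>verts G. \<forall>v\<in>verts G. (u, v) \<in> (adj_rel G)\<^sup>*)"

text \<open>Sombor index: sum over edges uv of sqrt(d_u^2 + d_v^2); for an edge e = {u,v}
  with u \<noteq> v this is sqrt of the sum over the two endpoints.\<close>
definition sombor :: "'a graph \<Rightarrow> real" where
  "sombor G = (\<Sum>e\<in>edges G. sqrt (\<Sum>v\<in>e. (real (degree G v))\<^sup>2))"

definition circuit :: "nat \<Rightarrow> (nat \<Rightarrow> 'a graph) \<Rightarrow> (nat \<Rightarrow> 'a) \<Rightarrow> 'a graph" where
  "circuit k Gs x =
     ((\<Union>i\<in>{1..k}. verts (Gs i)),
      (\<Union>i\<in>{1..k}. edges (Gs i)) \<union> {{x i, x (i + 1)} | i. 1 \<le> i \<and> i \<le> k - 1} \<union> {{x k, x 1}})"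

end

theory Submission
  imports Defs
begin

text \<open>The edge set of the circuit is the disjoint union of the edge sets of the \<open>G\<^sub>i\<close> and
  the \<open>k\<close> cycle edges \<open>x\<^sub>i x\<^sub>i\<^sub>+\<^sub>1\<close>. Degrees only grow when passing from \<open>G\<^sub>i\<close> to the
  circuit, so the edges of \<open>G\<^sub>i\<close> contribute at least \<open>SO(G\<^sub>i)\<close>; a cycle edge with end
  degrees \<open>a, b > 0\<close> contributes \<open>sqrt (a\<^sup>2 + b\<^sup>2) > \<bar>a - b\<bar> / sqrt 2\<close>, which is equivalent
  to \<open>(a + b)\<^sup>2 > 0\<close>.\<close>

lemma abs_diff_div_sqrt2_less_sqrt_sum_squares:
  fixes a b :: real
  assumes "a + b \<noteq> 0"
  shows "\<bar>a - b\<bar> / sqrt 2 < sqrt (a\<^sup>2 + b\<^sup>2)"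
proof -
  have "\<bar>a - b\<bar> / sqrt 2 = sqrt ((a - b)\<^sup>2 / 2)"
    by (simp add: real_sqrt_divide)
  also have "\<dots> < sqrt (a\<^sup>2 + b\<^sup>2)"
  proof (rule real_sqrt_less_mono)
    have "0 < (a + b)\<^sup>2" using assms by simp
    then show "(a - b)\<^sup>2 / 2 < a\<^sup>2 + b\<^sup>2" by (simp add: power2_eq_square algebra_simps)
  qed
  finally show ?thesis .
qed

definition sombor_weight :: "'a graph \<Rightarrow> 'a set \<Rightarrow> real" where
  "sombor_weight G e = sqrt (\<Sum>v\<in>e. (real (degree G v))\<^sup>2)"

lemma sombor_eq_sum_sombor_weight: "sombor G = sum (sombor_weight G) (edges G)"
  by (simp add: sombor_def sombor_weight_def)

lemma simple_graph_edge_subset: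
  assumes "simple_graph G" "e \<in> edges G"
  shows "e \<subseteq> verts G" "e \<noteq> {}"
  using assms unfolding simple_graph_def by force+

lemma simple_graph_finite_edges:
  assumes "simple_graph G"
  shows "finite (edges G)"
proof (rule finite_subset)
  show "edges G \<subseteq> Pow (verts G)" using simple_graph_edge_subset[OF assms] by blast
  show "finite (Pow (verts G))" using assms by (simp add: simple_graph_def)
qed

lemma degree_mono_edges:
  assumes "edges H \<subseteq> edges G" "finite (edges G)"
  shows "degree H v \<le> degree G v"
  unfolding degree_def using assms by (intro card_mono) auto

lemma sombor_le_sum_sombor_weight_supergraph:
  assumes "edges H \<subseteq> edges G" "finite (edges G)"
  shows "sombor H \<le> sum (sombor_weight G) (edges H)"
  unfolding sombor_eq_sum_sombor_weight sombor_weight_def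
  by (intro sum_mono real_sqrt_le_mono power_mono) (use degree_mono_edges[OF assms] in auto)

definition cyc_succ :: "nat \<Rightarrow> nat \<Rightarrow> nat" where
  "cyc_succ k i = (if i < k then i + 1 else 1)"

lemma sum_cyc_succ:
  assumes "1 \<le> k"
  shows "(\<Sum>i=1..k. h i (cyc_succ k i)) = h k 1 + (\<Sum>i=1..k-1. h i (i + 1))"
proof -
  have "{1..k} = insert k {1..k-1}" using assms by auto
  then have "(\<Sum>i=1..k. h i (cyc_succ k i)) = h k 1 + (\<Sum>i=1..k-1. h i (cyc_succ k i))"
    using assms by (simp add: cyc_succ_def)
  also have "(\<Sum>i=1..k-1. h i (cyc_succ k i)) = (\<Sum>i=1..k-1. h i (i + 1))"
    by (rule sum.cong) (auto simp: cyc_succ_def)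
  finally show ?thesis .
qed

locale graph_circuit =
  fixes k :: nat and Gs :: "nat \<Rightarrow> 'a graph" and x :: "nat \<Rightarrow> 'a"
  assumes three_le_k: "3 \<le> k"
    and simple_component: "i \<in> {1..k} \<Longrightarrow> simple_graph (Gs i)"
    and disjoint_components:
      "i \<in> {1..k} \<Longrightarrow> j \<in> {1..k} \<Longrightarrow> i \<noteq> j \<Longrightarrow> verts (Gs i) \<inter> verts (Gs j) = {}"
    and root_in_component: "i \<in> {1..k} \<Longrightarrow> x i \<in> verts (Gs i)"
begin

abbreviation G :: "'a graph" where "G \<equiv> circuit k Gs x"

definition cycle_edge :: "nat \<Rightarrow> 'a set" where
  "cycle_edge i = {x i, x (cyc_succ k i)}"

abbreviation component_edges :: "'a set set" where
  "component_edges \<equiv> \<Union>i\<in>{1..k}. edges (Gs i)"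

lemma cyc_succ_in_range: "i \<in> {1..k} \<Longrightarrow> cyc_succ k i \<in> {1..k}"
  and cyc_succ_neq: "i \<in> {1..k} \<Longrightarrow> cyc_succ k i \<noteq> i"
  and cyc_succ_succ_neq: "i \<in> {1..k} \<Longrightarrow> cyc_succ k (cyc_succ k i) \<noteq> i"
  using three_le_k by (auto simp: cyc_succ_def)

lemma root_in_component_iff:
  assumes "i \<in> {1..k}" "j \<in> {1..k}"
  shows "x i \<in> verts (Gs j) \<longleftrightarrow> i = j"
  using assms disjoint_components root_in_component by blast

lemma inj_on_roots: "inj_on x {1..k}"
  using root_in_component_iff by (metis inj_onI)

lemma edges_circuit: "edges G = component_edges \<union> cycle_edge ` {1..k}"
proof -
  have "{{x i, x (i + 1)} | i. 1 \<le> i \<and> i \<le> k - 1} \<union> {{x k, x 1}} = cycle_edge ` {1..k}"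
  proof (intro equalityI subsetI)
    fix e assume "e \<in> {{x i, x (i + 1)} | i. 1 \<le> i \<and> i \<le> k - 1} \<union> {{x k, x 1}}"
    then consider i where "i \<in> {1..k-1}" "e = {x i, x (i + 1)}" | "e = {x k, x 1}"
      by auto
    then show "e \<in> cycle_edge ` {1..k}"
    proof cases
      case 1
      then have "e = cycle_edge i" "i \<in> {1..k}" by (auto simp: cycle_edge_def cyc_succ_def)
      then show ?thesis by blast
    next
      case 2
      then have "e = cycle_edge k" "k \<in> {1..k}"
        using three_le_k by (auto simp: cycle_edge_def cyc_succ_def)
      then show ?thesis by blast
    qed
  next
    fix e assume "e \<in> cycle_edge ` {1..k}"
    then obtain i where "i \<in> {1..k}" "e = cycle_edge i" by blast
    then show "e \<in> {{x i, x (i + 1)} | i. 1 \<le> i \<and> i \<le> k - 1} \<union> {{x k, x 1}}"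
      by (cases "i < k") (auto simp: cycle_edge_def cyc_succ_def)
  qed
  then show ?thesis unfolding circuit_def edges_def by (simp only: snd_conv Un_assoc)
qed

lemma finite_component_edges: "finite component_edges"
  using simple_graph_finite_edges simple_component by blast

lemma finite_edges_circuit: "finite (edges G)"
  using finite_component_edges by (simp add: edges_circuit)

lemma cycle_edge_notin_component_edges:
  assumes "j \<in> {1..k}"
  shows "cycle_edge j \<notin> component_edges"
proof
  assume "cycle_edge j \<in> component_edges"
  then obtain i where i: "i \<in> {1..k}" "cycle_edge j \<subseteq> verts (Gs i)"
    using simple_graph_edge_subset simple_component by blast
  then have "j = i" "cyc_succ k j = i"
    using root_in_component_iff assms cyc_succ_in_range by (auto simp: cycle_edge_def)
  then show False using cyc_succ_neq assms by simp
qed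

lemma inj_on_cycle_edge: "inj_on cycle_edge {1..k}"
proof
  fix i j assume ij: "i \<in> {1..k}" "j \<in> {1..k}" "cycle_edge i = cycle_edge j"
  show "i = j"
  proof (rule ccontr)
    assume "i \<noteq> j"
    \<comment> \<open>this is where \<open>k \<ge> 3\<close> is needed: for \<open>k = 2\<close> the two cycle edges coincide\<close>
    then have "x i \<noteq> x j" using ij inj_on_roots by (metis inj_on_contraD)
    then have "x i = x (cyc_succ k j)" "x j = x (cyc_succ k i)"
      using ij(3) unfolding cycle_edge_def doubleton_eq_iff by auto
    then have "i = cyc_succ k j" "j = cyc_succ k i"
      using ij inj_on_roots cyc_succ_in_range by (auto dest: inj_onD)
    then show False using cyc_succ_succ_neq[OF ij(1)] by metis
  qed
qed

lemma disjoint_component_edges: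
  assumes "i \<in> {1..k}" "j \<in> {1..k}" "i \<noteq> j"
  shows "edges (Gs i) \<inter> edges (Gs j) = {}"
proof (intro equals0I)
  fix e assume "e \<in> edges (Gs i) \<inter> edges (Gs j)"
  then have "e \<subseteq> verts (Gs i) \<inter> verts (Gs j)" "e \<noteq> {}"
    using simple_graph_edge_subset simple_component assms(1,2) by (meson IntD1 IntD2 le_infI)+
  then show False using disjoint_components[OF assms] by blast
qed

lemma sombor_circuit_eq:
  "sombor G = (\<Sum>i=1..k. sum (sombor_weight G) (edges (Gs i)))
            + (\<Sum>i=1..k. sombor_weight G (cycle_edge i))"
proof -
  have "sombor G = sum (sombor_weight G) component_edges
                 + sum (sombor_weight G) (cycle_edge ` {1..k})"
    unfolding sombor_eq_sum_sombor_weight edges_circuit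
    using finite_component_edges cycle_edge_notin_component_edges
    by (intro sum.union_disjoint) auto
  also have "sum (sombor_weight G) component_edges
           = (\<Sum>i=1..k. sum (sombor_weight G) (edges (Gs i)))"
    using simple_component[THEN simple_graph_finite_edges] disjoint_component_edges
    by (intro sum.UNION_disjoint) auto
  also have "sum (sombor_weight G) (cycle_edge ` {1..k}) = (\<Sum>i=1..k. sombor_weight G (cycle_edge i))"
    using inj_on_cycle_edge by (simp add: sum.reindex)
  finally show ?thesis .
qed

lemma sombor_component_le:
  assumes "i \<in> {1..k}"
  shows "sombor (Gs i) \<le> sum (sombor_weight G) (edges (Gs i))"
  using assms by (intro sombor_le_sum_sombor_weight_supergraph finite_edges_circuit)
    (auto simp: edges_circuit)

lemma degree_root_pos:
  assumes "i \<in> {1..k}"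
  shows "0 < degree G (x i)"
proof -
  have "cycle_edge i \<in> {e \<in> edges G. x i \<in> e}"
    using assms by (auto simp: edges_circuit cycle_edge_def)
  then show ?thesis
    unfolding degree_def using finite_edges_circuit by (auto simp: card_gt_0_iff)
qed

lemma sombor_weight_cycle_edge_gt:
  assumes "i \<in> {1..k}"
  shows "\<bar>real (degree G (x i)) - real (degree G (x (cyc_succ k i)))\<bar> / sqrt 2
           < sombor_weight G (cycle_edge i)"
proof -
  have "x i \<noteq> x (cyc_succ k i)"
    using assms cyc_succ_in_range cyc_succ_neq inj_on_roots by (metis inj_on_contraD)
  then show ?thesis
    using degree_root_pos[OF assms]
    by (simp add: sombor_weight_def cycle_edge_def abs_diff_div_sqrt2_less_sqrt_sum_squares)
qed

end

theorem mainTheorem3: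
  fixes k :: nat and Gs :: "nat \<Rightarrow> 'a graph" and x :: "nat \<Rightarrow> 'a"
  assumes "k \<ge> 3"
    and "\<And>i. i \<in> {1..k} \<Longrightarrow> connected_graph (Gs i)"
    and "\<And>i j. i \<in> {1..k} \<Longrightarrow> j \<in> {1..k} \<Longrightarrow> i \<noteq> j \<Longrightarrow> verts (Gs i) \<inter> verts (Gs j) = {}"
    and "\<And>i. i \<in> {1..k} \<Longrightarrow> x i \<in> verts (Gs i)"
  shows "sombor (circuit k Gs x) >
     \<bar>real (degree (circuit k Gs x) (x 1)) - real (degree (circuit k Gs x) (x k))\<bar> / sqrt 2
     + (\<Sum>i=1..k. sombor (Gs i))
     + (\<Sum>i=1..k-1. \<bar>real (degree (circuit k Gs x) (x i)) - real (degree (circuit k Gs x) (x (i+1)))\<bar> / sqrt 2)"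
proof -
  interpret graph_circuit k Gs x
    using assms by unfold_locales (auto simp: connected_graph_def)
  define d where "d v = real (degree G v)" for v
  have "(\<Sum>i=1..k. sombor (Gs i)) \<le> (\<Sum>i=1..k. sum (sombor_weight G) (edges (Gs i)))"
    by (intro sum_mono sombor_component_le)
  moreover have "(\<Sum>i=1..k. \<bar>d (x i) - d (x (cyc_succ k i))\<bar> / sqrt 2)
                   < (\<Sum>i=1..k. sombor_weight G (cycle_edge i))"
    using three_le_k unfolding d_def by (intro sum_strict_mono sombor_weight_cycle_edge_gt) auto
  moreover have "(\<Sum>i=1..k. \<bar>d (x i) - d (x (cyc_succ k i))\<bar> / sqrt 2)
      = \<bar>d (x 1) - d (x k)\<bar> / sqrt 2 + (\<Sum>i=1..k-1. \<bar>d (x i) - d (x (i + 1))\<bar> / sqrt 2)"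
    using sum_cyc_succ[of k "\<lambda>i j. \<bar>d (x i) - d (x j)\<bar> / sqrt 2"] three_le_k
    by (simp add: abs_minus_commute)
  ultimately show ?thesis
    using sombor_circuit_eq unfolding d_def by linarith
qed

end
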